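(* The class of languages representable by Xtructures over a finite alphabet $\Sigma$ is exactly the class of languages recognized by deterministic acyclic finite state automata (DAFSAs) over $\Sigma$: for every Xtructure there is a DAFSA accepting the same language, and for every DAFSA there is an Xtructure representing the same language.
   Context: Fix a finite alphabet $\Sigma$. A symbol layer is a nonempty subset $S \subseteq \Sigma$, represented as a single character, a finite disjunction of characters, or a character class. A token structure is a finite sequence $(l_1,\dots,l_n)$ of symbol layers, representing the strings $c_1\cdots c_n$ with $c_i\in l_i$. A branch is a finite sequence of token structures interleaved with fixed delimiter characters, representing the corresponding concatenations. An Xtructure $X$ is a finite set of branches and represents the language $L(X)$, the union of the languages of its branches; equivalently it is a directed acyclic graph whose nodes are symbol layers and whose edges are transitions, deterministic in that a string is never represented by more than one branch. A DAFSA is a deterministic finite automaton whose transition graph is acyclic. *)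

theory Defs
  imports Main
begin

type_synonym 'a token_structure = "'a set list"

text \<open>A branch: a first token structure, followed by a list of pairs
  (delimiter character, token structure).  This is the sequence
  T0 d1 T1 d2 T2 ... dk Tk.\<close>
type_synonym 'a branch = "'a token_structure \<times> ('a \<times> 'a token_structure) list"

definition symbol_layer :: "'a set \<Rightarrow> 'a set \<Rightarrow> bool" where
  "symbol_layer \<Sigma> S \<longleftrightarrow> S \<noteq> {} \<and> S \<subseteq> \<Sigma>"

definition wf_token_structure :: "'a set \<Rightarrow> 'a token_structure \<Rightarrow> bool" where
  "wf_token_structure \<Sigma> t \<longleftrightarrow> (\<forall>l\<in>set t. symbol_layer \<Sigma> l)"

definition wf_branch :: "'a set \<Rightarrow> 'a branch \<Rightarrow> bool" where
  "wf_branch \<Sigma> b \<longleftrightarrow> wf_token_structure \<Sigma> (fst b) \<and>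
     (\<forall>(d, t)\<in>set (snd b). d \<in> \<Sigma> \<and> wf_token_structure \<Sigma> t)"

definition lang_ts :: "'a token_structure \<Rightarrow> 'a list set" where
  "lang_ts t = {w. length w = length t \<and> (\<forall>i<length t. w ! i \<in> t ! i)}"

definition conc :: "'a list set \<Rightarrow> 'a list set \<Rightarrow> 'a list set" where
  "conc A B = {u @ v | u v. u \<in> A \<and> v \<in> B}"

definition lang_branch :: "'a branch \<Rightarrow> 'a list set" where
  "lang_branch b = foldl (\<lambda>L (d, t). conc L (conc {[d]} (lang_ts t))) (lang_ts (fst b)) (snd b)"

text \<open>An Xtructure: a finite set of well-formed branches, deterministic in the
  sense that no string is represented by more than one branch.\<close>
definition xtructure :: "'a set \<Rightarrow> 'a branch set \<Rightarrow> bool" where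
  "xtructure \<Sigma> X \<longleftrightarrow> finite X \<and> (\<forall>b\<in>X. wf_branch \<Sigma> b) \<and>
     (\<forall>b1\<in>X. \<forall>b2\<in>X. b1 \<noteq> b2 \<longrightarrow> lang_branch b1 \<inter> lang_branch b2 = {})"

definition lang_x :: "'a branch set \<Rightarrow> 'a list set" where
  "lang_x X = (\<Union>b\<in>X. lang_branch b)"

record ('s, 'a) dfa =
  states :: "'s set"
  start :: 's
  delta :: "'s \<Rightarrow> 'a \<Rightarrow> 's option"
  final :: "'s set"

definition dfa :: "'a set \<Rightarrow> ('s, 'a) dfa \<Rightarrow> bool" where
  "dfa \<Sigma> A \<longleftrightarrow> finite (states A) \<and> start A \<in> states A \<and> final A \<subseteq> states A \<and>
     (\<forall>q a q'. delta A q a = Some q' \<longrightarrow> q \<in> states A \<and> a \<in> \<Sigma> \<and> q' \<in> states A)"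

definition trans_graph :: "('s, 'a) dfa \<Rightarrow> ('s \<times> 's) set" where
  "trans_graph A = {(q, q'). \<exists>a. delta A q a = Some q'}"

definition dafsa :: "'a set \<Rightarrow> ('s, 'a) dfa \<Rightarrow> bool" where
  "dafsa \<Sigma> A \<longleftrightarrow> dfa \<Sigma> A \<and> acyclic (trans_graph A)"

fun run :: "('s, 'a) dfa \<Rightarrow> 's \<Rightarrow> 'a list \<Rightarrow> 's option" where
  "run A q [] = Some q"
| "run A q (a # w) = (case delta A q a of None \<Rightarrow> None | Some q' \<Rightarrow> run A q' w)"

definition lang_dfa :: "('s, 'a) dfa \<Rightarrow> 'a list set" where
  "lang_dfa A = {w. \<exists>q. run A (start A) w = Some q \<and> q \<in> final A}"

end

theory Submission
  imports Defs "HOL-Library.Sublist"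
begin

text \<open>Both classes consist exactly of the finite languages over \<open>\<Sigma>\<close>.
  An Xtructure is a finite union of finite concatenations of finite languages.
  A DAFSA has finitely many states and a well-founded successor relation, so by
  well-founded induction only finitely many words can be read from any state.
  Conversely, a finite language is accepted by its prefix tree, with the prefixes
  coded as natural numbers, and it is represented by the Xtructure with one branch
  of singleton layers per word.\<close>

lemma finite_conc: "finite A \<Longrightarrow> finite B \<Longrightarrow> finite (conc A B)"
proof -
  have "conc A B = (\<lambda>(u, v). u @ v) ` (A \<times> B)" unfolding conc_def by auto
  thus "finite A \<Longrightarrow> finite B \<Longrightarrow> ?thesis" by simp
qed

lemma conc_subset_lists: "A \<subseteq> lists S \<Longrightarrow> B \<subseteq> lists S \<Longrightarrow> conc A B \<subseteq> lists S"
  unfolding conc_def by (auto dest!: subsetD)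

lemma lang_ts_subset:
  assumes "wf_token_structure \<Sigma> t"
  shows "lang_ts t \<subseteq> {w. set w \<subseteq> \<Sigma> \<and> length w = length t}"
proof safe
  fix w c assume w: "w \<in> lang_ts t" and "c \<in> set w"
  then obtain i where "i < length t" "c = w ! i"
    by (auto simp: lang_ts_def in_set_conv_nth)
  moreover have "t ! i \<subseteq> \<Sigma>"
    using assms \<open>i < length t\<close> nth_mem
    unfolding wf_token_structure_def symbol_layer_def by blast
  ultimately show "c \<in> \<Sigma>" using w unfolding lang_ts_def by blast
qed (simp add: lang_ts_def)

lemma finite_lang_ts: "finite \<Sigma> \<Longrightarrow> wf_token_structure \<Sigma> t \<Longrightarrow> finite (lang_ts t)"
  by (rule finite_subset[OF lang_ts_subset finite_lists_length_eq])

lemma lang_ts_subset_lists: "wf_token_structure \<Sigma> t \<Longrightarrow> lang_ts t \<subseteq> lists \<Sigma>"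
  using lang_ts_subset by blast

lemma finite_lang_branch_foldl:
  assumes "finite \<Sigma>" and "\<forall>(d, t)\<in>set ts. d \<in> \<Sigma> \<and> wf_token_structure \<Sigma> t"
    and "finite L" and "L \<subseteq> lists \<Sigma>"
  shows "finite (foldl (\<lambda>L (d, t). conc L (conc {[d]} (lang_ts t))) L ts) \<and>
         foldl (\<lambda>L (d, t). conc L (conc {[d]} (lang_ts t))) L ts \<subseteq> lists \<Sigma>"
  using assms(2-4)
proof (induction ts arbitrary: L)
  case Nil
  thus ?case by simp
next
  case (Cons dt ts)
  obtain d t where dt: "dt = (d, t)" by (cases dt)
  from Cons.prems(1) have "d \<in> \<Sigma>" and t: "wf_token_structure \<Sigma> t"
    and ts: "\<forall>(d, t)\<in>set ts. d \<in> \<Sigma> \<and> wf_token_structure \<Sigma> t"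
    unfolding dt by simp_all
  let ?L' = "conc L (conc {[d]} (lang_ts t))"
  have "finite ?L'"
    using Cons.prems(2) finite_lang_ts[OF assms(1) t] by (intro finite_conc) simp_all
  moreover have "?L' \<subseteq> lists \<Sigma>"
    using Cons.prems(3) lang_ts_subset_lists[OF t] \<open>d \<in> \<Sigma>\<close>
    by (intro conc_subset_lists) simp_all
  ultimately show ?case using Cons.IH[OF ts] by (simp add: dt)
qed

lemma finite_lang_branch:
  assumes "finite \<Sigma>" and "wf_branch \<Sigma> b"
  shows "finite (lang_branch b) \<and> lang_branch b \<subseteq> lists \<Sigma>"
proof -
  have "wf_token_structure \<Sigma> (fst b)"
    and "\<forall>(d, t)\<in>set (snd b). d \<in> \<Sigma> \<and> wf_token_structure \<Sigma> t"
    using assms(2) unfolding wf_branch_def by simp_all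
  thus ?thesis unfolding lang_branch_def
    using assms(1) by (intro finite_lang_branch_foldl finite_lang_ts lang_ts_subset_lists)
qed

lemma finite_lang_x:
  assumes "finite \<Sigma>" and "xtructure \<Sigma> X"
  shows "finite (lang_x X) \<and> lang_x X \<subseteq> lists \<Sigma>"
proof -
  have "finite X" and "\<forall>b\<in>X. wf_branch \<Sigma> b"
    using assms(2) unfolding xtructure_def by simp_all
  thus ?thesis using finite_lang_branch[OF assms(1)] unfolding lang_x_def by blast
qed

lemma run_subset_lists: "dfa \<Sigma> A \<Longrightarrow> run A q w = Some q' \<Longrightarrow> w \<in> lists \<Sigma>"
  by (induction w arbitrary: q) (auto simp: dfa_def split: option.splits)

lemma wf_converse_trans_graph:
  assumes "dafsa \<Sigma> A"
  shows "wf ((trans_graph A)\<inverse>)"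
proof (rule finite_acyclic_wf_converse)
  have "trans_graph A \<subseteq> states A \<times> states A"
    using assms unfolding dafsa_def dfa_def trans_graph_def by blast
  moreover have "finite (states A)" using assms unfolding dafsa_def dfa_def by simp
  ultimately show "finite (trans_graph A)" by (meson finite_SigmaI finite_subset)
  show "acyclic (trans_graph A)" using assms unfolding dafsa_def by simp
qed

lemma finite_defined_runs:
  assumes "finite \<Sigma>" and A: "dafsa \<Sigma> A"
  shows "finite {w. run A q w \<noteq> None}"
proof (induction q rule: wf_induct[OF wf_converse_trans_graph[OF A]])
  case (1 q)
  let ?succs = "\<lambda>a. {q'. delta A q a = Some q'}"
  have cover: "{w. run A q w \<noteq> None} \<subseteq>
      insert [] (\<Union>a\<in>\<Sigma>. \<Union>q'\<in>?succs a. Cons a ` {w. run A q' w \<noteq> None})"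
  proof
    fix w assume "w \<in> {w. run A q w \<noteq> None}"
    then show "w \<in> insert [] (\<Union>a\<in>\<Sigma>. \<Union>q'\<in>?succs a. Cons a ` {w. run A q' w \<noteq> None})"
    proof (cases w)
      case (Cons a w')
      assume "w \<in> {w. run A q w \<noteq> None}"
      then obtain q' where q': "delta A q a = Some q'" "run A q' w' \<noteq> None"
        using Cons by (auto split: option.splits)
      hence "a \<in> \<Sigma>" using A unfolding dafsa_def dfa_def by blast
      thus ?thesis using q' Cons by blast
    qed simp
  qed
  have "finite (Cons a ` {w. run A q' w \<noteq> None})" if "q' \<in> ?succs a" for a q'
    using that 1 unfolding trans_graph_def by auto
  moreover have "finite (?succs a)" for a
    by (cases "delta A q a") auto
  ultimately have "finite (insert [] (\<Union>a\<in>\<Sigma>. \<Union>q'\<in>?succs a. Cons a ` {w. run A q' w \<noteq> None}))"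
    using assms(1) by (intro finite.insertI finite_UN_I) auto
  thus ?case by (rule finite_subset[OF cover])
qed

lemma finite_lang_dfa:
  assumes "finite \<Sigma>" and "dafsa \<Sigma> A"
  shows "finite (lang_dfa A) \<and> lang_dfa A \<subseteq> lists \<Sigma>"
proof
  have "lang_dfa A \<subseteq> {w. run A (start A) w \<noteq> None}"
    unfolding lang_dfa_def by auto
  thus "finite (lang_dfa A)" by (rule finite_subset[OF _ finite_defined_runs[OF assms]])
  have "dfa \<Sigma> A" using assms(2) unfolding dafsa_def by simp
  show "lang_dfa A \<subseteq> lists \<Sigma>"
  proof
    fix w assume "w \<in> lang_dfa A"
    then obtain q where "run A (start A) w = Some q" unfolding lang_dfa_def by blast
    with \<open>dfa \<Sigma> A\<close> show "w \<in> lists \<Sigma>" by (rule run_subset_lists)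
  qed
qed

lemma lang_ts_singletons: "lang_ts (map (\<lambda>c. {c}) w) = {w}"
  unfolding lang_ts_def by (auto intro: nth_equalityI)

lemma finite_lang_imp_xtructure:
  assumes "finite L" and "L \<subseteq> lists \<Sigma>"
  shows "\<exists>X. xtructure \<Sigma> X \<and> lang_x X = L"
proof -
  define word_branch :: "'a list \<Rightarrow> 'a branch" where
    "word_branch w = (map (\<lambda>c. {c}) w, [])" for w
  have lang_word_branch: "lang_branch (word_branch w) = {w}" for w
    unfolding lang_branch_def word_branch_def by (simp add: lang_ts_singletons)
  have "wf_branch \<Sigma> (word_branch w)" if "w \<in> L" for w
    using that assms(2)
    by (auto simp: word_branch_def wf_branch_def wf_token_structure_def symbol_layer_def)
  moreover have "lang_branch b1 \<inter> lang_branch b2 = {}"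
    if "b1 \<in> word_branch ` L" "b2 \<in> word_branch ` L" "b1 \<noteq> b2" for b1 b2
    using that lang_word_branch by auto
  ultimately have "xtructure \<Sigma> (word_branch ` L)"
    using assms(1) unfolding xtructure_def by blast
  moreover have "lang_x (word_branch ` L) = L"
    unfolding lang_x_def by (simp add: lang_word_branch)
  ultimately show ?thesis by blast
qed

text \<open>The prefix tree of a prefix-closed set \<open>P\<close> of words. Its states are the words
  of \<open>P\<close>, coded by an injection \<open>enc\<close> into the naturals because the theorem fixes the
  state type \<open>nat\<close>; \<open>enc p\<close> is the state reached by reading \<open>p\<close>.\<close>

definition prefix_tree :: "('a list \<Rightarrow> nat) \<Rightarrow> 'a list set \<Rightarrow> 'a list set \<Rightarrow> (nat, 'a) dfa" where
  "prefix_tree enc P L =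
     \<lparr>states = enc ` P, start = enc [],
      delta = (\<lambda>n a. if n \<in> enc ` P \<and> inv_into P enc n @ [a] \<in> P
                      then Some (enc (inv_into P enc n @ [a])) else None),
      final = enc ` L\<rparr>"

locale prefix_closed_coding =
  fixes enc :: "'a list \<Rightarrow> nat" and P :: "'a list set"
  assumes inj_enc: "inj_on enc P"
    and Nil_in: "[] \<in> P"
    and prefix_closed: "p @ s \<in> P \<Longrightarrow> p \<in> P"
begin

lemma delta_prefix_tree:
  "delta (prefix_tree enc P L) n a = Some n' \<longleftrightarrow>
     (\<exists>p\<in>P. n = enc p \<and> p @ [a] \<in> P \<and> n' = enc (p @ [a]))"
  using inj_enc by (auto simp: prefix_tree_def)

lemma run_prefix_tree:
  "p \<in> P \<Longrightarrow> run (prefix_tree enc P L) (enc p) w =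
     (if p @ w \<in> P then Some (enc (p @ w)) else None)"
proof (induction w arbitrary: p)
  case Nil
  thus ?case by simp
next
  case (Cons a w)
  show ?case
  proof (cases "p @ [a] \<in> P")
    case True
    thus ?thesis using Cons inj_enc by (simp add: prefix_tree_def)
  next
    case False
    hence "p @ a # w \<notin> P" using prefix_closed[of "p @ [a]" w] by auto
    thus ?thesis using False Cons.prems inj_enc by (simp add: prefix_tree_def)
  qed
qed

lemma lang_prefix_tree:
  assumes "L \<subseteq> P"
  shows "lang_dfa (prefix_tree enc P L) = L"
proof -
  have "w \<in> lang_dfa (prefix_tree enc P L) \<longleftrightarrow> w \<in> P \<and> enc w \<in> enc ` L" for w
    using run_prefix_tree[OF Nil_in, of L w] by (simp add: lang_dfa_def prefix_tree_def)
  also have "\<dots> w \<longleftrightarrow> w \<in> L" for w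
    using inj_on_image_mem_iff[OF inj_enc _ assms] assms by blast
  finally show ?thesis by blast
qed

lemma dafsa_prefix_tree:
  assumes "finite P" and "P \<subseteq> lists \<Sigma>" and "L \<subseteq> P"
  shows "dafsa \<Sigma> (prefix_tree enc P L)"
  unfolding dafsa_def
proof
  have "q \<in> enc ` P \<and> a \<in> \<Sigma> \<and> q' \<in> enc ` P"
    if "delta (prefix_tree enc P L) q a = Some q'" for q a q'
  proof -
    from that obtain p where "p \<in> P" "q = enc p" "p @ [a] \<in> P" "q' = enc (p @ [a])"
      unfolding delta_prefix_tree by blast
    moreover from \<open>p @ [a] \<in> P\<close> assms(2) have "a \<in> \<Sigma>" by auto
    ultimately show ?thesis by blast
  qed
  moreover have "enc ` L \<subseteq> enc ` P" using assms(3) by (rule image_mono)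
  ultimately show "dfa \<Sigma> (prefix_tree enc P L)"
    using assms(1) Nil_in unfolding dfa_def prefix_tree_def dfa.simps by blast
  have "trans_graph (prefix_tree enc P L) \<subseteq> measure (\<lambda>n. length (inv_into P enc n))"
    using inj_enc by (auto simp: trans_graph_def delta_prefix_tree)
  thus "acyclic (trans_graph (prefix_tree enc P L))"
    by (rule acyclic_subset[OF wf_acyclic[OF wf_measure]])
qed

end

lemma finite_lang_imp_dafsa:
  assumes "finite L" and "L \<subseteq> lists \<Sigma>"
  shows "\<exists>A :: (nat, 'a) dfa. dafsa \<Sigma> A \<and> lang_dfa A = L"
proof -
  define P where "P = insert [] (\<Union>w\<in>L. set (prefixes w))"
  have "finite P" using assms(1) unfolding P_def by simp
  then obtain enc :: "'a list \<Rightarrow> nat" where "inj_on enc P"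
    using finite_imp_inj_to_nat_seg by blast
  moreover have "p \<in> P" if "p @ s \<in> P" for p s
    using that prefix_order.trans[OF prefixI[OF refl, of p s]] unfolding P_def by auto
  ultimately have "prefix_closed_coding enc P"
    unfolding prefix_closed_coding_def P_def by blast
  then interpret prefix_closed_coding enc P .
  have "L \<subseteq> P" unfolding P_def by auto
  have "P \<subseteq> lists \<Sigma>"
    using assms(2) unfolding P_def by (auto simp: prefix_def dest!: subsetD)
  show ?thesis
    using dafsa_prefix_tree[OF \<open>finite P\<close> \<open>P \<subseteq> lists \<Sigma>\<close> \<open>L \<subseteq> P\<close>]
      lang_prefix_tree[OF \<open>L \<subseteq> P\<close>] by blast
qed

theorem mainTheorem3:
  fixes \<Sigma> :: "'a set"
  assumes "finite \<Sigma>"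
  shows "(\<forall>X. xtructure \<Sigma> X \<longrightarrow>
            (\<exists>A :: (nat, 'a) dfa. dafsa \<Sigma> A \<and> lang_dfa A = lang_x X))
       \<and> (\<forall>A :: ('s, 'a) dfa. dafsa \<Sigma> A \<longrightarrow>
            (\<exists>X. xtructure \<Sigma> X \<and> lang_x X = lang_dfa A))"
proof (intro conjI allI impI)
  fix X assume "xtructure \<Sigma> X"
  with assms have "finite (lang_x X)" and "lang_x X \<subseteq> lists \<Sigma>"
    by (simp_all add: finite_lang_x)
  thus "\<exists>A :: (nat, 'a) dfa. dafsa \<Sigma> A \<and> lang_dfa A = lang_x X"
    by (rule finite_lang_imp_dafsa)
next
  fix A :: "('s, 'a) dfa" assume "dafsa \<Sigma> A"
  with assms have "finite (lang_dfa A)" and "lang_dfa A \<subseteq> lists \<Sigma>"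
    by (simp_all add: finite_lang_dfa)
  thus "\<exists>X. xtructure \<Sigma> X \<and> lang_x X = lang_dfa A"
    by (rule finite_lang_imp_xtructure)
qed

end
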